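(* Let $(\mathrm{A},(\mathcal{S}_\tau)_{\tau\in\mathbb{R}},u)$ be a symmetric collision model that is stationary at equilibrium. Then for every state $\sigma\in\mathsf{St}_1(\mathrm{A})$, $\sigma$ is invariant under the collisional dynamics it generates: $\mathcal{U}_{t,\sigma}(\sigma)=\sigma$ for all $t\in\mathbb{R}$.
   Context: Setting: an operational probabilistic theory (systems closed under $\otimes$ with trivial system; sets of transformations $\mathsf{Transf}(\mathrm{A}\to\mathrm{B})$ closed under $\circ$ and $\otimes$; states $\mathsf{St}(\mathrm{A})$, effects $\mathsf{Eff}(\mathrm{A})$, deterministic ones $\mathsf{St}_1,\mathsf{Eff}_1$; probabilities from closed circuits; transformation spaces finite-dimensional, sets of transformations convex and closed). $\mathsf{G}_{\mathrm{A}}$ denotes the (compact Lie) group of reversible transformations of $\mathrm{A}$. A symmetric collision model $(\mathrm{A},(\mathcal{S}_\tau),u)$ consists of a system $\mathrm{A}$, a one-parameter subgroup $(\mathcal{S}_\tau)_{\tau\in\mathbb{R}}$ of $\mathsf{G}_{\mathrm{A}\otimes\mathrm{A}}$ and a deterministic effect $u\in\mathsf{Eff}_1(\mathrm{A})$. For $\sigma\in\mathsf{St}_1(\mathrm{A})$ the collision is $\mathcal{C}_{\tau,\sigma}=(\mathcal{I}_{\mathrm{A}}\otimes u)\circ\mathcal{S}_\tau\circ(\mathcal{I}_{\mathrm{A}}\otimes\sigma)$ and the collisional dynamics is $\mathcal{U}_{t,\sigma}=\lim_{n\to\infty}(\mathcal{C}_{t/n,\sigma})^n$. The model is stationary at equilibrium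 if $\mathcal{S}_\tau(\rho\otimes\rho)=\rho\otimes\rho$ for all $\rho\in\mathsf{St}_1(\mathrm{A})$ and all $\tau\in\mathbb{R}$. *)

theory Defs
  imports "HOL-Analysis.Analysis"
begin

text \<open>
  Linear-representation model of the part of an operational probabilistic theory
  needed for a symmetric collision model.  The (finite-dimensional) real vector
  space spanned by the states of system A is the type 'a, that of A (x) A is 'b.
  Transformations act as linear maps on these spaces, effects as linear functionals.

  Parameters:
   tens  : the (bilinear) parallel composition of states  rho (x) sigma
   St1   : deterministic states St_1(A)
   Eff1  : deterministic effects Eff_1(A)
   GAA   : the group G_{A(x)A} of reversible transformations of A (x) A
   S     : the one-parameter subgroup (S_tau)
   u     : the deterministic effect of the model
   uA    : the transformation I_A (x) u : A (x) A -> A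
\<close>

definition opt_group :: "('b::euclidean_space \<Rightarrow> 'b) set \<Rightarrow> bool" where
  "opt_group G \<longleftrightarrow> (\<forall>g\<in>G. linear g \<and> bij g) \<and> id \<in> G \<and>
     (\<forall>g\<in>G. \<forall>h\<in>G. g \<circ> h \<in> G) \<and> (\<forall>g\<in>G. inv g \<in> G)"

definition one_param_subgroup :: "('b::euclidean_space \<Rightarrow> 'b) set \<Rightarrow> (real \<Rightarrow> 'b \<Rightarrow> 'b) \<Rightarrow> bool" where
  "one_param_subgroup G S \<longleftrightarrow> (\<forall>\<tau>. S \<tau> \<in> G) \<and> S 0 = id \<and>
     (\<forall>s t. S (s + t) = S s \<circ> S t) \<and> (\<forall>x. continuous_on UNIV (\<lambda>\<tau>. S \<tau> x))"

definition symmetric_collision_model ::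
  "('a::euclidean_space \<Rightarrow> 'a \<Rightarrow> 'b::euclidean_space) \<Rightarrow> 'a set \<Rightarrow> ('a \<Rightarrow> real) set
   \<Rightarrow> ('b \<Rightarrow> 'b) set \<Rightarrow> (real \<Rightarrow> 'b \<Rightarrow> 'b) \<Rightarrow> ('a \<Rightarrow> real) \<Rightarrow> ('b \<Rightarrow> 'a) \<Rightarrow> bool" where
  "symmetric_collision_model tens St1 Eff1 GAA S u uA \<longleftrightarrow>
     bilinear tens \<and>
     (\<forall>e\<in>Eff1. linear e) \<and>
     (\<forall>e\<in>Eff1. \<forall>\<sigma>\<in>St1. e \<sigma> = 1) \<and>
     opt_group GAA \<and> one_param_subgroup GAA S \<and>
     u \<in> Eff1 \<and>
     linear uA \<and> (\<forall>x y. uA (tens x y) = u y *\<^sub>R x)"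

definition stationary_at_equilibrium ::
  "('a \<Rightarrow> 'a \<Rightarrow> 'b) \<Rightarrow> 'a set \<Rightarrow> (real \<Rightarrow> 'b \<Rightarrow> 'b) \<Rightarrow> bool" where
  "stationary_at_equilibrium tens St1 S \<longleftrightarrow>
     (\<forall>\<rho>\<in>St1. \<forall>\<tau>. S \<tau> (tens \<rho> \<rho>) = tens \<rho> \<rho>)"

definition collision ::
  "('a \<Rightarrow> 'a \<Rightarrow> 'b) \<Rightarrow> (real \<Rightarrow> 'b \<Rightarrow> 'b) \<Rightarrow> ('b \<Rightarrow> 'a) \<Rightarrow> real \<Rightarrow> 'a \<Rightarrow> 'a \<Rightarrow> 'a" where
  "collision tens S uA \<tau> \<sigma> = (\<lambda>\<rho>. uA (S \<tau> (tens \<rho> \<sigma>)))"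

definition collision_iter ::
  "('a \<Rightarrow> 'a \<Rightarrow> 'b) \<Rightarrow> (real \<Rightarrow> 'b \<Rightarrow> 'b) \<Rightarrow> ('b \<Rightarrow> 'a) \<Rightarrow> real \<Rightarrow> 'a \<Rightarrow> nat \<Rightarrow> 'a \<Rightarrow> 'a" where
  "collision_iter tens S uA t \<sigma> n = (collision tens S uA (t / real n) \<sigma>) ^^ n"

text \<open>The limit defining U_{t,sigma} exists (operator convergence; for linear maps on
  a finite-dimensional space this is pointwise convergence).\<close>
definition collisional_dynamics_exists ::
  "('a::euclidean_space \<Rightarrow> 'a \<Rightarrow> 'b) \<Rightarrow> (real \<Rightarrow> 'b \<Rightarrow> 'b) \<Rightarrow> ('b \<Rightarrow> 'a) \<Rightarrow> real \<Rightarrow> 'a \<Rightarrow> bool" where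
  "collisional_dynamics_exists tens S uA t \<sigma> \<longleftrightarrow>
     (\<forall>\<rho>. convergent (\<lambda>n. collision_iter tens S uA t \<sigma> n \<rho>))"

definition collisional_dynamics ::
  "('a::euclidean_space \<Rightarrow> 'a \<Rightarrow> 'b) \<Rightarrow> (real \<Rightarrow> 'b \<Rightarrow> 'b) \<Rightarrow> ('b \<Rightarrow> 'a) \<Rightarrow> real \<Rightarrow> 'a \<Rightarrow> 'a \<Rightarrow> 'a" where
  "collisional_dynamics tens S uA t \<sigma> = (\<lambda>\<rho>. lim (\<lambda>n. collision_iter tens S uA t \<sigma> n \<rho>))"

end

theory Submission
  imports Defs
begin

text \<open>
  Since \<open>u\<close> is deterministic and \<open>\<sigma> \<otimes> \<sigma>\<close> is a fixed point of every \<open>S\<^sub>\<tau>\<close>, each collision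
  maps \<open>\<sigma>\<close> to \<open>(u \<sigma>) \<sigma> = \<sigma>\<close>. Hence every approximant \<open>(C\<^bsub>t/n,\<sigma>\<^esub>)\<^sup>n\<close> fixes \<open>\<sigma>\<close>, and so
  does their limit.
\<close>

lemma funpow_fixed_point: "f x = x \<Longrightarrow> (f ^^ n) x = x"
  by (induction n) simp_all

lemma collision_fixes_equilibrium_state:
  assumes "symmetric_collision_model tens St1 Eff1 GAA S u uA"
    and "stationary_at_equilibrium tens St1 S"
    and "\<sigma> \<in> St1"
  shows "collision tens S uA \<tau> \<sigma> \<sigma> = \<sigma>"
proof -
  have "u \<sigma> = 1" and "uA (tens \<sigma> \<sigma>) = u \<sigma> *\<^sub>R \<sigma>"
    using assms(1,3) unfolding symmetric_collision_model_def by blast+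
  moreover have "S \<tau> (tens \<sigma> \<sigma>) = tens \<sigma> \<sigma>"
    using assms(2,3) unfolding stationary_at_equilibrium_def by blast
  ultimately show ?thesis
    unfolding collision_def by simp
qed

text \<open>The approximants are constant in \<open>n\<close> here.\<close>

lemma collisional_dynamics_fixed_point:
  assumes "\<And>\<tau>. collision tens S uA \<tau> \<sigma> \<rho> = \<rho>"
  shows "collisional_dynamics tens S uA t \<sigma> \<rho> = \<rho>"
proof -
  have "(\<lambda>n. collision_iter tens S uA t \<sigma> n \<rho>) = (\<lambda>n. \<rho>)"
    unfolding collision_iter_def using assms by (simp add: funpow_fixed_point)
  then show ?thesis
    unfolding collisional_dynamics_def by (simp add: lim_const)
qed

theorem lemma1:
  fixes tens :: "'a::euclidean_space \<Rightarrow> 'a \<Rightarrow> 'b::euclidean_space"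
    and St1 :: "'a set" and Eff1 :: "('a \<Rightarrow> real) set"
    and GAA :: "('b \<Rightarrow> 'b) set" and S :: "real \<Rightarrow> 'b \<Rightarrow> 'b"
    and u :: "'a \<Rightarrow> real" and uA :: "'b \<Rightarrow> 'a"
  assumes "symmetric_collision_model tens St1 Eff1 GAA S u uA"
    and "stationary_at_equilibrium tens St1 S"
    and "\<sigma> \<in> St1"
    and "\<forall>t. collisional_dynamics_exists tens S uA t \<sigma>"
  shows "\<forall>t. collisional_dynamics tens S uA t \<sigma> \<sigma> = \<sigma>"
  using collisional_dynamics_fixed_point collision_fixes_equilibrium_state[OF assms(1-3)]
  by blast

end
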